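(* The problem of computing the core number of a fixed designated vertex $v$ (on incremental graph streams) admits an extendable bitwise AND gadget with $v(d)=O(d^2)$ and $t(d)=O(d^4)$.
   Context: The core number of a vertex $v$ in $G$ is the largest $k$ such that $v$ belongs to a subgraph of $G$ with minimum degree at least $k$. Let $\zeta\in\mathbb N$ be a fixed constant and $m=\zeta d$. An extendable bitwise AND gadget for a graph function $g$ (here real-valued: the core number of the designated vertex $v$, which is a vertex of the gadget graph) consists of positive increasing functions $v,t:\mathbb N\to\mathbb N$ and, for each $d$: an initial graph $H_{\mathrm{init}}=(V,E_0)$ with $|V|=v(d)$; edges $e_1,\dots,e_d\in\binom V2$, defining $H^1_x=H_{\mathrm{init}}\cup\{e_i: x_i=1\}$ for $x\in\{0,1\}^d$; and for every sequence of queries $q^1,\dots,q^m\in\{0,1\}^d$, edge sets $S^1,T^1,\dots,S^m,T^m$ and functions $\mathrm{dec}_j:\mathrm{Range}(g)\to\mathbb R$ (depending on the queries but not on $x$) such that: (a) each $\mathrm{dec}_j$ is $1$-Lipschitz; (b) with $Q^j_x=H^j_x\cup S^j$, $\mathrm{dec}_j(g(Q^j_x))-\mathrm{dec}_j(g(H^j_x))=\langle x,q^j\rangle$ for all $x$; (c) $H^{j+1}_x=Q^j_x\cup T^j$; and the total number of edge insertions $|E_0|+d+\sum_j(|S^j|+|T^j|)$ is at most $t(d)$. For real-valued $g$ one may take $\mathrm{dec}_j=\mathrm{id}$. *)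

theory Defs
  imports Complex_Main "HOL-Library.Landau_Symbols"
begin

definition edges_on :: "nat set \<Rightarrow> nat set set" where
  "edges_on V = {e. e \<subseteq> V \<and> card e = 2}"

definition in_min_deg_subgraph :: "nat set \<Rightarrow> nat set set \<Rightarrow> nat \<Rightarrow> nat \<Rightarrow> bool" where
  "in_min_deg_subgraph V E v k \<longleftrightarrow>
     (\<exists>S F. S \<subseteq> V \<and> F \<subseteq> E \<and> (\<forall>e\<in>F. e \<subseteq> S) \<and> v \<in> S \<and>
            (\<forall>u\<in>S. k \<le> card {e\<in>F. u \<in> e}))"

definition core_number :: "nat set \<Rightarrow> nat set set \<Rightarrow> nat \<Rightarrow> nat" where
  "core_number V E v = (GREATEST k. in_min_deg_subgraph V E v k)"

definition bit_inner :: "nat \<Rightarrow> (nat \<Rightarrow> bool) \<Rightarrow> (nat \<Rightarrow> bool) \<Rightarrow> real" where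
  "bit_inner d x q = (\<Sum>i<d. of_bool (x i) * of_bool (q i))"

text \<open>Graph sequence (0-indexed: H x 0 = H^1_x, H x (Suc j) = Q^j_x \<union> T^j).\<close>
fun gadget_H :: "nat set set \<Rightarrow> (nat \<Rightarrow> nat set) \<Rightarrow> nat \<Rightarrow> (nat \<Rightarrow> nat set set)
                 \<Rightarrow> (nat \<Rightarrow> nat set set) \<Rightarrow> (nat \<Rightarrow> bool) \<Rightarrow> nat \<Rightarrow> nat set set" where
  "gadget_H E0 e d S T x 0 = E0 \<union> {e i | i. i < d \<and> x i}"
| "gadget_H E0 e d S T x (Suc j) = gadget_H E0 e d S T x j \<union> S j \<union> T j"

definition gadget_Q :: "nat set set \<Rightarrow> (nat \<Rightarrow> nat set) \<Rightarrow> nat \<Rightarrow> (nat \<Rightarrow> nat set set)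
                 \<Rightarrow> (nat \<Rightarrow> nat set set) \<Rightarrow> (nat \<Rightarrow> bool) \<Rightarrow> nat \<Rightarrow> nat set set" where
  "gadget_Q E0 e d S T x j = gadget_H E0 e d S T x j \<union> S j"

text \<open>Extendable bitwise AND gadget for a graph function g (real valued; g V E w is the
  value on graph (V,E) with designated vertex w), with m = zeta * d queries.
  Queries are indexed 0..m-1.\<close>
definition ext_AND_gadget ::
  "(nat set \<Rightarrow> nat set set \<Rightarrow> nat \<Rightarrow> real) \<Rightarrow> nat \<Rightarrow> (nat \<Rightarrow> nat) \<Rightarrow> (nat \<Rightarrow> nat) \<Rightarrow> bool" where
  "ext_AND_gadget g \<zeta> nv t \<longleftrightarrow>
    (\<forall>d. 0 < nv d \<and> 0 < t d) \<and> mono nv \<and> mono t \<and>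
    (\<forall>d. \<exists>V E0 e w.
        finite V \<and> card V = nv d \<and> w \<in> V \<and> E0 \<subseteq> edges_on V \<and>
        (\<forall>i<d. e i \<in> edges_on V) \<and>
        (\<forall>q :: nat \<Rightarrow> nat \<Rightarrow> bool. \<exists>S T dec.
            (\<forall>j < \<zeta> * d. S j \<subseteq> edges_on V \<and> T j \<subseteq> edges_on V) \<and>
            (\<forall>j < \<zeta> * d. \<forall>a \<in> {g V' E' w' | V' E' w'. True}. \<forall>b \<in> {g V' E' w' | V' E' w'. True}.
                 \<bar>dec j a - dec j b\<bar> \<le> \<bar>a - b\<bar>) \<and>
            (\<forall>j < \<zeta> * d. \<forall>x :: nat \<Rightarrow> bool.
                 dec j (g V (gadget_Q E0 e d S T x j) w) - dec j (g V (gadget_H E0 e d S T x j) w)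
                   = bit_inner d x (q j)) \<and>
            card E0 + d + (\<Sum>j < \<zeta> * d. card (S j) + card (T j)) \<le> t d))"

end

theory Submission
  imports Defs
begin

(* The gadget consists of the designated vertex w, one vertex per input bit, joined to w
   by its input edge, and a large clique, the pool, whose vertices have degree far above every
   core number that occurs. Before query j the vertex w is adjacent to the first (j+1)(d+1)
   pool vertices, and this number is its core number: a bit vertex only counts if its own
   degree exceeds it. The edges S^j join every bit vertex i with q_i = 1 to (j+1)(d+1)+d pool
   vertices, so precisely the bit vertices with x_i = q_i = 1 enter the core of w, which
   raises its core number by <x, q>. The edges T^j then join w to d+1 further pool vertices,
   after which the boosted bit vertices again have degree below the core number of w. *)

lemma ext_AND_gadgetI:
  fixes g :: "nat set \<Rightarrow> nat set set \<Rightarrow> nat \<Rightarrow> real"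
    and V :: "nat \<Rightarrow> nat set" and E :: "nat \<Rightarrow> nat set set" and e :: "nat \<Rightarrow> nat \<Rightarrow> nat set"
    and w :: "nat \<Rightarrow> nat" and S T :: "nat \<Rightarrow> (nat \<Rightarrow> nat \<Rightarrow> bool) \<Rightarrow> nat \<Rightarrow> nat set set"
  assumes "\<And>d. 0 < nv d" "\<And>d. 0 < t d" "mono nv" "mono t"
    and "\<And>d. finite (V d)" "\<And>d. card (V d) = nv d" "\<And>d. w d \<in> V d"
    and "\<And>d. E d \<subseteq> edges_on (V d)" "\<And>d i. i < d \<Longrightarrow> e d i \<in> edges_on (V d)"
    and "\<And>d q j. j < \<zeta> * d \<Longrightarrow> S d q j \<subseteq> edges_on (V d)"
    and "\<And>d q j. j < \<zeta> * d \<Longrightarrow> T d q j \<subseteq> edges_on (V d)"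
    and "\<And>d q j x. j < \<zeta> * d \<Longrightarrow>
           g (V d) (gadget_Q (E d) (e d) d (S d q) (T d q) x j) (w d)
         - g (V d) (gadget_H (E d) (e d) d (S d q) (T d q) x j) (w d) = bit_inner d x (q j)"
    and "\<And>d q. card (E d) + d + (\<Sum>j<\<zeta> * d. card (S d q j) + card (T d q j)) \<le> t d"
  shows "ext_AND_gadget g \<zeta> nv t"
  unfolding ext_AND_gadget_def
  apply (intro conjI allI)
  using assms(1-4) apply (simp_all)[4]
  subgoal for d
    using assms
    by (intro exI[of _ "V d"] exI[of _ "E d"] exI[of _ "e d"] exI[of _ "w d"] allI
        exI[of _ "S d _"] exI[of _ "T d _"] exI[of _ "\<lambda>j a. a"] conjI) auto
  done

section \<open>Core numbers\<close>

abbreviation incident :: "nat set set \<Rightarrow> nat \<Rightarrow> nat set set" where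
  "incident E u \<equiv> {e\<in>E. u \<in> e}"

lemma core_number_eqI:
  assumes "in_min_deg_subgraph V E w r"
    and "\<And>k. in_min_deg_subgraph V E w k \<Longrightarrow> k \<le> r"
  shows "core_number V E w = r"
  unfolding core_number_def by (rule Greatest_equality) (use assms in auto)

lemma in_min_deg_subgraphI:
  assumes "S \<subseteq> V" "w \<in> S" "finite E"
    and "\<And>u. u \<in> S \<Longrightarrow> \<exists>A\<subseteq>E. (\<forall>e\<in>A. e \<subseteq> S \<and> u \<in> e) \<and> r \<le> card A"
  shows "in_min_deg_subgraph V E w r"
  unfolding in_min_deg_subgraph_def
proof (intro exI[of _ S] exI[of _ "{e\<in>E. e \<subseteq> S}"] conjI ballI)
  show "S \<subseteq> V" "w \<in> S"
    by (fact assms)+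
  show "{e\<in>E. e \<subseteq> S} \<subseteq> E"
    by blast
  show "e \<subseteq> S" if "e \<in> {e\<in>E. e \<subseteq> S}" for e
    using that by blast
  fix u assume "u \<in> S"
  then obtain A where A: "A \<subseteq> E" "\<forall>e\<in>A. e \<subseteq> S \<and> u \<in> e" "r \<le> card A"
    using assms(4)[OF \<open>u \<in> S\<close>] by auto
  have "A \<subseteq> incident {e\<in>E. e \<subseteq> S} u"
    using A(1,2) by blast
  then have "card A \<le> card (incident {e\<in>E. e \<subseteq> S} u)"
    using \<open>finite E\<close> by (intro card_mono) simp_all
  then show "r \<le> card (incident {e\<in>E. e \<subseteq> S} u)"
    using A(3) by linarith
qed

lemma in_min_deg_subgraph_le:
  assumes "finite E" "finite B" "card B \<le> r"
    and pairs: "\<And>e. e \<in> E \<Longrightarrow> w \<in> e \<Longrightarrow> \<exists>y. e = {w, y}"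
    and low_degree: "\<And>y. {w, y} \<in> E \<Longrightarrow> y \<notin> B \<Longrightarrow> card (incident E y) \<le> r"
    and "in_min_deg_subgraph V E w k"
  shows "k \<le> r"
proof (rule ccontr)
  assume "\<not> k \<le> r"
  from \<open>in_min_deg_subgraph V E w k\<close> obtain S F where F: "F \<subseteq> E" "\<forall>e\<in>F. e \<subseteq> S" "w \<in> S"
    and deg: "\<forall>u\<in>S. k \<le> card (incident F u)"
    unfolding in_min_deg_subgraph_def by blast
  have "incident F w \<subseteq> (\<lambda>y. {w, y}) ` B"
  proof
    fix e assume e: "e \<in> incident F w"
    then obtain y where y: "e = {w, y}" using pairs F(1) by blast
    have "y \<in> B"
    proof (rule ccontr)
      assume "y \<notin> B"
      have "y \<in> S" using F(2) e y by blast
      have "card (incident F y) \<le> card (incident E y)"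
        using F(1) \<open>finite E\<close> by (intro card_mono) auto
      also have "\<dots> \<le> r" using low_degree \<open>y \<notin> B\<close> e y F(1) by blast
      finally show False using deg \<open>y \<in> S\<close> \<open>\<not> k \<le> r\<close> by fastforce
    qed
    then show "e \<in> (\<lambda>y. {w, y}) ` B" using y by blast
  qed
  then have "card (incident F w) \<le> card ((\<lambda>y. {w, y}) ` B)"
    using \<open>finite B\<close> by (intro card_mono) auto
  also have "\<dots> \<le> card B"
    using \<open>finite B\<close> by (rule card_image_le)
  finally show False using deg F(3) \<open>card B \<le> r\<close> \<open>\<not> k \<le> r\<close> by fastforce
qed

section \<open>The gadget graphs\<close>

(* Vertex 0 is the designated vertex, vertex Suc i is the far end of the i-th input edge,
   and vertex d + 1 + k is the k-th vertex of the pool. *)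

definition pool_size :: "nat \<Rightarrow> nat \<Rightarrow> nat" where
  "pool_size z d = (z * d + 2) * (d + 1)"

definition round_core :: "nat \<Rightarrow> nat \<Rightarrow> nat" where
  "round_core d j = (j + 1) * (d + 1)"

definition gadget_order :: "nat \<Rightarrow> nat \<Rightarrow> nat" where
  "gadget_order z d = d + 1 + pool_size z d"

definition gadget_vertices :: "nat \<Rightarrow> nat \<Rightarrow> nat set" where
  "gadget_vertices z d = {..< gadget_order z d}"

definition pool_clique :: "nat \<Rightarrow> nat \<Rightarrow> nat set set" where
  "pool_clique z d = {{d+1+a, d+1+b} | a b. a < pool_size z d \<and> b < pool_size z d \<and> a \<noteq> b}"

definition hub_edges :: "nat \<Rightarrow> nat \<Rightarrow> nat set set" where
  "hub_edges d n = {{0, d+1+k} | k. k < n}"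

definition boost_edges :: "nat \<Rightarrow> nat set \<Rightarrow> nat \<Rightarrow> nat set set" where
  "boost_edges d I n = {{Suc i, d+1+k} | i k. i \<in> I \<and> k < n}"

definition bit_edge :: "nat \<Rightarrow> nat set" where
  "bit_edge i = {0, Suc i}"

definition gadget_E0 :: "nat \<Rightarrow> nat \<Rightarrow> nat set set" where
  "gadget_E0 z d = pool_clique z d \<union> hub_edges d (round_core d 0)"

definition query_edges :: "nat \<Rightarrow> (nat \<Rightarrow> nat \<Rightarrow> bool) \<Rightarrow> nat \<Rightarrow> nat set set" where
  "query_edges d q j = boost_edges d {i. i < d \<and> q j i} (round_core d j + d)"

definition round_edges :: "nat \<Rightarrow> nat \<Rightarrow> nat set set" where
  "round_edges d j = hub_edges d (round_core d (Suc j))"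

abbreviation gadget_graph ::
  "nat \<Rightarrow> nat \<Rightarrow> (nat \<Rightarrow> nat \<Rightarrow> bool) \<Rightarrow> (nat \<Rightarrow> bool) \<Rightarrow> nat \<Rightarrow> nat set set" where
  "gadget_graph z d q x j \<equiv> gadget_H (gadget_E0 z d) bit_edge d (query_edges d q) (round_edges d) x j"

lemma round_core_Suc: "round_core d (Suc j) = round_core d j + d + 1"
  by (simp add: round_core_def)

lemma round_core_pos: "0 < round_core d j"
  by (simp add: round_core_def)

lemma round_core_le_pool_size: "j \<le> z * d \<Longrightarrow> round_core d j + d < pool_size z d"
  unfolding round_core_def pool_size_def
  by (drule mult_le_mono1[of _ _ "d + 1"]) (simp add: algebra_simps)

lemma hub_edges_eq_image: "hub_edges d n = (\<lambda>k. {0, d+1+k}) ` {..<n}"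
  by (auto simp: hub_edges_def)

lemma boost_edges_eq_image: "boost_edges d I n = (\<lambda>(i, k). {Suc i, d+1+k}) ` (I \<times> {..<n})"
  by (auto simp: boost_edges_def)

lemma pool_clique_subset_image:
  "pool_clique z d \<subseteq> (\<lambda>(a, b). {d+1+a, d+1+b}) ` ({..<pool_size z d} \<times> {..<pool_size z d})"
  by (auto simp: pool_clique_def)

lemma finite_pool_clique: "finite (pool_clique z d)"
  using pool_clique_subset_image by (rule finite_subset) simp

lemma finite_hub_edges: "finite (hub_edges d n)"
  by (simp add: hub_edges_eq_image)

lemma finite_boost_edges: "finite I \<Longrightarrow> finite (boost_edges d I n)"
  by (simp add: boost_edges_eq_image)

lemma card_pool_clique: "card (pool_clique z d) \<le> pool_size z d ^ 2"
proof -
  let ?P = "{..<pool_size z d} \<times> {..<pool_size z d}"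
  have "card (pool_clique z d) \<le> card ((\<lambda>(a, b). {d+1+a, d+1+b}) ` ?P)"
    by (rule card_mono[OF _ pool_clique_subset_image]) simp
  also have "\<dots> \<le> card ?P"
    by (rule card_image_le) simp
  finally show ?thesis
    by (simp add: card_cartesian_product power2_eq_square)
qed

lemma card_hub_edges: "card (hub_edges d n) = n"
  by (simp add: hub_edges_eq_image card_image inj_on_def doubleton_eq_iff)

lemma card_boost_edges: "finite I \<Longrightarrow> card (boost_edges d I n) \<le> card I * n"
  unfolding boost_edges_eq_image
  by (metis card_cartesian_product card_image_le card_lessThan finite_SigmaI finite_lessThan)

lemma card_boost_edges_singleton: "card (boost_edges d {i} n) = n"
  by (simp add: boost_edges_eq_image card_image inj_on_def doubleton_eq_iff)

lemma hub_edges_mono: "m \<le> n \<Longrightarrow> hub_edges d m \<subseteq> hub_edges d n"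
  by (auto simp: hub_edges_def)

lemma boost_edges_mono: "I \<subseteq> J \<Longrightarrow> m \<le> n \<Longrightarrow> boost_edges d I m \<subseteq> boost_edges d J n"
  by (fastforce simp: boost_edges_def)

lemma pool_clique_edges_on: "pool_clique z d \<subseteq> edges_on (gadget_vertices z d)"
  by (auto simp: pool_clique_def edges_on_def gadget_vertices_def gadget_order_def)

lemma hub_edges_edges_on: "n \<le> pool_size z d \<Longrightarrow> hub_edges d n \<subseteq> edges_on (gadget_vertices z d)"
  by (auto simp: hub_edges_def edges_on_def gadget_vertices_def gadget_order_def)

lemma boost_edges_edges_on:
  "I \<subseteq> {..<d} \<Longrightarrow> n \<le> pool_size z d \<Longrightarrow> boost_edges d I n \<subseteq> edges_on (gadget_vertices z d)"
  by (auto simp: boost_edges_def edges_on_def gadget_vertices_def gadget_order_def)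

lemma bit_edge_edges_on: "i < d \<Longrightarrow> bit_edge i \<in> edges_on (gadget_vertices z d)"
  by (auto simp: bit_edge_def edges_on_def gadget_vertices_def gadget_order_def)

lemma gadget_E0_edges_on: "gadget_E0 z d \<subseteq> edges_on (gadget_vertices z d)"
  using round_core_le_pool_size[of 0 z d]
  by (simp add: gadget_E0_def pool_clique_edges_on hub_edges_edges_on)

lemma query_edges_edges_on: "j < z * d \<Longrightarrow> query_edges d q j \<subseteq> edges_on (gadget_vertices z d)"
  using round_core_le_pool_size[of j z d]
  unfolding query_edges_def by (intro boost_edges_edges_on) auto

lemma round_edges_edges_on: "j < z * d \<Longrightarrow> round_edges d j \<subseteq> edges_on (gadget_vertices z d)"
  using round_core_le_pool_size[of j z d]
  unfolding round_edges_def by (intro hub_edges_edges_on) (simp add: round_core_Suc)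

lemma inj_bit_edge: "inj bit_edge"
  by (auto simp: inj_def bit_edge_def doubleton_eq_iff)

lemma boost_edges_empty: "boost_edges d {} n = {}"
  by (simp add: boost_edges_def)

lemma gadget_graph_eq:
  "gadget_graph z d q x j = pool_clique z d \<union> hub_edges d (round_core d j)
     \<union> bit_edge ` {i. i < d \<and> x i} \<union> (\<Union>l<j. query_edges d q l)"
proof (induction j)
  case 0
  have "{bit_edge i | i. i < d \<and> x i} = bit_edge ` {i. i < d \<and> x i}"
    by blast
  then show ?case
    by (simp add: gadget_E0_def)
next
  case (Suc j)
  have "hub_edges d (round_core d j) \<subseteq> hub_edges d (round_core d (Suc j))"
    by (rule hub_edges_mono) (simp add: round_core_Suc)
  then show ?case
    by (simp only: gadget_H.simps Suc.IH lessThan_Suc UN_insert) (simp only: round_edges_def; blast)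
qed

lemma past_query_edges_subset:
  "(\<Union>l<j. query_edges d q l) \<subseteq> boost_edges d {..<d} (round_core d j - 1)"
proof (rule UN_least)
  fix l assume "l \<in> {..<j}"
  then have "(l + 2) * (d + 1) \<le> (j + 1) * (d + 1)"
    by (intro mult_le_mono1) simp
  then have "round_core d l + d \<le> round_core d j - 1"
    unfolding round_core_def by (simp add: algebra_simps)
  then show "query_edges d q l \<subseteq> boost_edges d {..<d} (round_core d j - 1)"
    unfolding query_edges_def by (rule boost_edges_mono[rotated]) auto
qed

lemma finite_gadget_graph: "finite (gadget_graph z d q x j)"
  by (simp add: gadget_graph_eq finite_pool_clique finite_hub_edges query_edges_def finite_boost_edges)

lemma incident_bit_vertex_subset:
  assumes "i < d" "i \<notin> I"
  shows "incident (gadget_graph z d q x j \<union> boost_edges d I n) (Suc i)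
           \<subseteq> insert (bit_edge i) (boost_edges d {i} (round_core d j - 1))"
  using assms past_query_edges_subset[of d q j]
  unfolding gadget_graph_eq
  by (auto simp: pool_clique_def hub_edges_def bit_edge_def boost_edges_def)

lemma card_incident_bit_vertex:
  assumes "i < d" "i \<notin> I"
  shows "card (incident (gadget_graph z d q x j \<union> boost_edges d I n) (Suc i)) \<le> round_core d j"
proof -
  have "card (incident (gadget_graph z d q x j \<union> boost_edges d I n) (Suc i))
      \<le> card (insert (bit_edge i) (boost_edges d {i} (round_core d j - 1)))"
    by (rule card_mono[OF _ incident_bit_vertex_subset[OF assms]]) (simp add: finite_boost_edges)
  also have "\<dots> \<le> round_core d j"
    using round_core_pos[of d j]
    by (simp add: card_insert_if finite_boost_edges card_boost_edges_singleton)
  finally show ?thesis .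
qed

lemma card_hub_and_bit_edges:
  assumes "J \<subseteq> {..<d}"
  shows "card (hub_edges d n \<union> bit_edge ` J) = n + card J"
proof -
  have "finite J"
    using assms finite_subset by blast
  then have "card (hub_edges d n \<union> bit_edge ` J) = card (hub_edges d n) + card (bit_edge ` J)"
    using assms by (intro card_Un_disjoint)
      (fastforce simp: finite_hub_edges hub_edges_def bit_edge_def doubleton_eq_iff)+
  then show ?thesis
    using card_image[OF inj_on_subset[OF inj_bit_edge subset_UNIV]] by (simp add: card_hub_edges)
qed

lemma gadget_core_lower:
  assumes J: "J \<subseteq> {..<d}" and n: "n + d < pool_size z d" and "finite E"
    and E: "pool_clique z d \<union> hub_edges d n \<union> bit_edge ` J \<union> boost_edges d J (n + d) \<subseteq> E"
  shows "in_min_deg_subgraph (gadget_vertices z d) E 0 (n + card J)"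
proof -
  define N where "N = pool_size z d"
  define S where "S = insert 0 ((\<lambda>k. d+1+k) ` {..<N} \<union> Suc ` J)"
  have "card J \<le> d"
    using card_mono[OF _ J] by simp
  show ?thesis
  proof (rule in_min_deg_subgraphI)
    show "S \<subseteq> gadget_vertices z d"
      using J by (auto simp: S_def gadget_vertices_def gadget_order_def N_def)
    show "0 \<in> S" "finite E"
      by (simp_all add: S_def \<open>finite E\<close>)
    fix u assume "u \<in> S"
    then consider "u = 0" | a where "a < N" "u = d+1+a" | i where "i \<in> J" "u = Suc i"
      unfolding S_def by blast
    then show "\<exists>A\<subseteq>E. (\<forall>e\<in>A. e \<subseteq> S \<and> u \<in> e) \<and> n + card J \<le> card A"
    proof cases
      case 1
      have "\<forall>e\<in>hub_edges d n \<union> bit_edge ` J. e \<subseteq> S \<and> u \<in> e"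
        using 1 n by (auto simp: hub_edges_def bit_edge_def S_def N_def)
      then show ?thesis
        using E card_hub_and_bit_edges[OF J, of n]
        by (intro exI[of _ "hub_edges d n \<union> bit_edge ` J"]) auto
    next
      case 2
      let ?A = "(\<lambda>b. {d+1+a, d+1+b}) ` ({..<N} - {a})"
      have "card ?A = N - 1"
        using 2 by (subst card_image) (auto simp: inj_on_def doubleton_eq_iff)
      then have size: "n + card J \<le> card ?A"
        using n \<open>card J \<le> d\<close> unfolding N_def by linarith
      have "?A \<subseteq> pool_clique z d"
        using 2 by (auto simp: pool_clique_def N_def)
      then have "?A \<subseteq> E"
        using E by blast
      moreover have "\<forall>e\<in>?A. e \<subseteq> S \<and> u \<in> e"
        using 2 by (auto simp: S_def)
      ultimately show ?thesis
        using size by blast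
    next
      case 3
      have "boost_edges d {i} (n + d) \<subseteq> boost_edges d J (n + d)"
        using 3 by (intro boost_edges_mono) auto
      then have "boost_edges d {i} (n + d) \<subseteq> E"
        using E by blast
      moreover have "\<forall>e\<in>boost_edges d {i} (n + d). e \<subseteq> S \<and> u \<in> e"
        using 3 n by (auto simp: boost_edges_def S_def N_def)
      moreover have "n + card J \<le> card (boost_edges d {i} (n + d))"
        using \<open>card J \<le> d\<close> by (simp add: card_boost_edges_singleton)
      ultimately show ?thesis
        by blast
    qed
  qed
qed

lemma incident_hub_subset:
  "incident (gadget_graph z d q x j \<union> boost_edges d I n) 0
     \<subseteq> hub_edges d (round_core d j) \<union> bit_edge ` {i. i < d \<and> x i}"
  using past_query_edges_subset[of d q j] unfolding gadget_graph_eq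
  by (auto simp: pool_clique_def boost_edges_def)

lemma gadget_core_upper:
  assumes I: "I \<subseteq> {..<d}"
    and k: "in_min_deg_subgraph V (gadget_graph z d q x j \<union> boost_edges d I (round_core d j + d)) 0 k"
  shows "k \<le> round_core d j + card {i\<in>I. x i}"
proof -
  let ?G = "gadget_graph z d q x j \<union> boost_edges d I (round_core d j + d)"
  let ?B = "(\<lambda>k. d+1+k) ` {..<round_core d j} \<union> Suc ` {i\<in>I. x i}"
  have "finite I"
    using I finite_subset by blast
  show ?thesis
  proof (rule in_min_deg_subgraph_le[OF _ _ _ _ _ k])
    show "finite ?G"
      by (simp add: finite_gadget_graph finite_boost_edges \<open>finite I\<close>)
    show "finite ?B"
      using \<open>finite I\<close> by simp
    have "card ?B \<le> card ((\<lambda>k. d+1+k) ` {..<round_core d j}) + card (Suc ` {i\<in>I. x i})"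
      by (rule card_Un_le)
    also have "\<dots> \<le> round_core d j + card {i\<in>I. x i}"
      using card_image_le[of "{..<round_core d j}" "\<lambda>k. d+1+k"]
        card_image_le[of "{i\<in>I. x i}" Suc] \<open>finite I\<close>
      by simp
    finally show "card ?B \<le> round_core d j + card {i\<in>I. x i}" .
    show "\<exists>y. e = {0, y}" if "e \<in> ?G" "0 \<in> e" for e
      using that incident_hub_subset[of z d q x j I "round_core d j + d"]
      by (auto simp: hub_edges_def bit_edge_def)
    show "card (incident ?G y) \<le> round_core d j + card {i\<in>I. x i}"
      if y: "{0, y} \<in> ?G" "y \<notin> ?B" for y
    proof -
      have "{0, y} \<in> hub_edges d (round_core d j) \<union> bit_edge ` {i. i < d \<and> x i}"
        using y(1) incident_hub_subset[of z d q x j I "round_core d j + d"] by blast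
      then obtain i where "i < d" "i \<notin> I" "y = Suc i"
        using y(2) by (fastforce simp: hub_edges_def bit_edge_def doubleton_eq_iff)
      then show ?thesis
        using card_incident_bit_vertex[of i d I z q x j "round_core d j + d"] by (simp add: trans_le_add1)
    qed
  qed
qed

theorem core_number_gadget:
  assumes j: "j \<le> z * d" and I: "I \<subseteq> {..<d}"
  shows "core_number (gadget_vertices z d) (gadget_graph z d q x j \<union> boost_edges d I (round_core d j + d)) 0
           = round_core d j + card {i\<in>I. x i}"
proof (rule core_number_eqI[OF gadget_core_lower gadget_core_upper[OF I]])
  show "{i\<in>I. x i} \<subseteq> {..<d}"
    using I by blast
  show "round_core d j + d < pool_size z d"
    using j by (rule round_core_le_pool_size)
  show "finite (gadget_graph z d q x j \<union> boost_edges d I (round_core d j + d))"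
    using finite_subset[OF I] by (simp add: finite_gadget_graph finite_boost_edges)
  have "boost_edges d {i\<in>I. x i} (round_core d j + d) \<subseteq> boost_edges d I (round_core d j + d)"
    by (rule boost_edges_mono) auto
  then show "pool_clique z d \<union> hub_edges d (round_core d j) \<union> bit_edge ` {i\<in>I. x i}
      \<union> boost_edges d {i\<in>I. x i} (round_core d j + d)
      \<subseteq> gadget_graph z d q x j \<union> boost_edges d I (round_core d j + d)"
    using I unfolding gadget_graph_eq by blast
qed

lemma bit_inner_eq_card: "bit_inner d x p = real (card {i. i < d \<and> p i \<and> x i})"
proof -
  have "bit_inner d x p = (\<Sum>i<d. of_bool (p i \<and> x i))"
    unfolding bit_inner_def by (intro sum.cong) auto
  also have "\<dots> = real (card ({..<d} \<inter> {i. p i \<and> x i}))"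
    by simp
  also have "{..<d} \<inter> {i. p i \<and> x i} = {i. i < d \<and> p i \<and> x i}"
    by auto
  finally show ?thesis .
qed

corollary gadget_core_increment:
  assumes "j < z * d"
  shows "real (core_number (gadget_vertices z d)
                 (gadget_Q (gadget_E0 z d) bit_edge d (query_edges d q) (round_edges d) x j) 0)
       - real (core_number (gadget_vertices z d) (gadget_graph z d q x j) 0)
       = bit_inner d x (q j)"
  using core_number_gadget[of j z d "{i. i < d \<and> q j i}" q x]
    core_number_gadget[of j z d "{}" q x] assms
  by (simp add: gadget_Q_def query_edges_def boost_edges_empty bit_inner_eq_card subset_iff)

section \<open>Size of the gadget\<close>

lemma card_gadget_E0: "card (gadget_E0 z d) \<le> pool_size z d ^ 2 + (d + 1)"
proof -
  have "card (gadget_E0 z d) \<le> card (pool_clique z d) + card (hub_edges d (round_core d 0))"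
    unfolding gadget_E0_def by (rule card_Un_le)
  then show ?thesis
    using card_pool_clique[of z d] by (simp add: card_hub_edges round_core_def)
qed

lemma card_query_edges: "card (query_edges d q j) \<le> d * (round_core d j + d)"
proof -
  have "card {i. i < d \<and> q j i} \<le> d"
    using card_mono[of "{..<d}" "{i. i < d \<and> q j i}"] by auto
  have "card (query_edges d q j) \<le> card {i. i < d \<and> q j i} * (round_core d j + d)"
    unfolding query_edges_def by (rule card_boost_edges) simp
  also have "\<dots> \<le> d * (round_core d j + d)"
    using \<open>card {i. i < d \<and> q j i} \<le> d\<close> by (rule mult_le_mono1)
  finally show ?thesis .
qed

lemma card_gadget_insertions:
  "card (gadget_E0 z d) + d + (\<Sum>j<z * d. card (query_edges d q j) + card (round_edges d j))
     \<le> pool_size z d ^ 2 + 2 * d + 1 + z * d * ((d + 1) * pool_size z d)"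
proof -
  have round: "card (query_edges d q j) + card (round_edges d j) \<le> (d + 1) * pool_size z d"
    if "j \<in> {..<z * d}" for j
  proof -
    have "round_core d j + d < pool_size z d"
      using that by (intro round_core_le_pool_size) simp
    then have "card (query_edges d q j) \<le> d * pool_size z d"
      using card_query_edges[of d q j] by (meson le_trans less_imp_le_nat mult_le_mono2)
    moreover have "card (round_edges d j) \<le> pool_size z d"
      using \<open>round_core d j + d < pool_size z d\<close>
      by (simp add: round_edges_def card_hub_edges round_core_Suc)
    ultimately show ?thesis
      by simp
  qed
  have "(\<Sum>j<z * d. card (query_edges d q j) + card (round_edges d j))
      \<le> of_nat (card {..<z * d}) * ((d + 1) * pool_size z d)"
    by (rule sum_bounded_above) (rule round)
  then have "(\<Sum>j<z * d. card (query_edges d q j) + card (round_edges d j))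
      \<le> z * d * ((d + 1) * pool_size z d)"
    by simp
  then show ?thesis
    using card_gadget_E0[of z d] by linarith
qed

definition insertion_budget :: "nat \<Rightarrow> nat \<Rightarrow> nat" where
  "insertion_budget z d = 2 * (z + 2)^2 * (d + 1)^4"

lemma pool_size_le: "pool_size z d \<le> (z + 2) * (d + 1)^2"
proof -
  have "z * d + 2 \<le> (z + 2) * (d + 1)"
    by (simp add: algebra_simps)
  then show ?thesis
    unfolding pool_size_def power2_eq_square by (metis mult.assoc mult_le_mono1)
qed

lemma insertion_count_le_budget:
  "pool_size z d ^ 2 + 2 * d + 1 + z * d * ((d + 1) * pool_size z d) \<le> insertion_budget z d"
proof -
  define N K D where "N = pool_size z d" and "K = z + 2" and "D = d + 1"
  have N: "N \<le> K * D^2"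
    unfolding N_def K_def D_def by (rule pool_size_le)
  have "N^2 \<le> (K * D^2)^2"
    using N by (rule power_mono) simp
  then have clique: "N^2 \<le> K^2 * D^4"
    by (simp add: power_mult_distrib power4_eq_xxxx power2_eq_square mult_ac)
  have "z * d * (D * N) \<le> z * D * (D * (K * D^2))"
    using N unfolding D_def by (intro mult_le_mono) auto
  then have rounds: "z * d * (D * N) \<le> z * K * D^4"
    by (simp add: power2_eq_square power4_eq_xxxx algebra_simps)
  have "D \<le> D^4"
    using power_increasing[of 1 4 D] by (simp add: D_def)
  then have inputs: "2 * d + 1 \<le> 2 * D^4"
    unfolding D_def by linarith
  have "z * K + 2 \<le> K^2"
    unfolding K_def by (simp add: power2_eq_square algebra_simps)
  then have "z * K * D^4 + 2 * D^4 \<le> K^2 * D^4"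
    using mult_le_mono1 by (metis add_mult_distrib)
  then have "N^2 + 2 * d + 1 + z * d * (D * N) \<le> 2 * (K^2 * D^4)"
    using clique rounds inputs by linarith
  then show ?thesis
    unfolding insertion_budget_def N_def K_def D_def by (simp add: mult.assoc)
qed

lemma gadget_order_le: "gadget_order z d \<le> (z + 3) * (d + 1)^2"
proof -
  have "d + 1 \<le> (d + 1)^2"
    by (simp add: power2_eq_square)
  moreover have "(z + 3) * (d + 1)^2 = (z + 2) * (d + 1)^2 + (d + 1)^2"
    by (simp add: algebra_simps)
  ultimately show ?thesis
    using pool_size_le[of z d] unfolding gadget_order_def by linarith
qed

lemma mono_gadget_order: "mono (gadget_order z)"
proof (rule monoI)
  fix a b :: nat assume "a \<le> b"
  then have "(z * a + 2) * (a + 1) \<le> (z * b + 2) * (b + 1)"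
    by (intro mult_le_mono) auto
  then show "gadget_order z a \<le> gadget_order z b"
    unfolding gadget_order_def pool_size_def using \<open>a \<le> b\<close> by linarith
qed

lemma mono_insertion_budget: "mono (insertion_budget z)"
  unfolding insertion_budget_def by (rule monoI) (simp add: power_mono)

lemma bigo_of_le_power:
  fixes f :: "nat \<Rightarrow> nat"
  assumes "\<And>d. f d \<le> C * (d + 1) ^ k"
  shows "(\<lambda>d. real (f d)) \<in> O(\<lambda>d. real d ^ k)"
proof (rule bigoI[where c = "real (C * 2 ^ k)"], rule eventually_at_top_linorderI[of 1])
  fix d :: nat assume "1 \<le> d"
  then have "(d + 1) ^ k \<le> (2 * d) ^ k"
    by (intro power_mono) auto
  then have "f d \<le> C * 2 ^ k * d ^ k"
    using assms[of d] by (metis le_trans mult.assoc mult_le_mono2 power_mult_distrib)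
  then have "real (f d) \<le> real (C * 2 ^ k * d ^ k)"
    by (rule of_nat_mono)
  then show "norm (real (f d)) \<le> real (C * 2 ^ k) * norm (real d ^ k)"
    by simp
qed

theorem mainTheorem4:
  fixes \<zeta> :: nat
  shows "\<exists>nv t. ext_AND_gadget (\<lambda>V E w. real (core_number V E w)) \<zeta> nv t \<and>
            (\<lambda>d. real (nv d)) \<in> O(\<lambda>d. real d ^ 2) \<and>
            (\<lambda>d. real (t d)) \<in> O(\<lambda>d. real d ^ 4)"
proof (intro exI conjI)
  show "ext_AND_gadget (\<lambda>V E w. real (core_number V E w)) \<zeta> (gadget_order \<zeta>) (insertion_budget \<zeta>)"
  proof (rule ext_AND_gadgetI[where V = "gadget_vertices \<zeta>" and E = "gadget_E0 \<zeta>"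
        and e = "\<lambda>d. bit_edge" and w = "\<lambda>d. 0" and S = query_edges and T = "\<lambda>d q. round_edges d"])
    show "mono (gadget_order \<zeta>)" "mono (insertion_budget \<zeta>)"
      by (rule mono_gadget_order mono_insertion_budget)+
    show "finite (gadget_vertices \<zeta> d)" "card (gadget_vertices \<zeta> d) = gadget_order \<zeta> d"
      "0 \<in> gadget_vertices \<zeta> d" for d
      by (simp_all add: gadget_vertices_def gadget_order_def)
    show "card (gadget_E0 \<zeta> d) + d + (\<Sum>j<\<zeta> * d. card (query_edges d q j) + card (round_edges d j))
        \<le> insertion_budget \<zeta> d" for d q
      using card_gadget_insertions insertion_count_le_budget by (rule le_trans)
  qed (simp_all add: gadget_order_def insertion_budget_def gadget_E0_edges_on bit_edge_edges_on
      query_edges_edges_on round_edges_edges_on gadget_core_increment)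
  show "(\<lambda>d. real (gadget_order \<zeta> d)) \<in> O(\<lambda>d. real d ^ 2)"
    using gadget_order_le by (rule bigo_of_le_power)
  show "(\<lambda>d. real (insertion_budget \<zeta> d)) \<in> O(\<lambda>d. real d ^ 4)"
    by (rule bigo_of_le_power[of _ "2 * (\<zeta> + 2)^2"]) (simp add: insertion_budget_def)
qed

end
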